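(* Let $\Omega,U\in C^\infty([0,\infty))$ and, for $r_0>0$, set $T(r)=\big(\Omega(r)-\Omega(r_0)\big)-\frac{\Omega'(r_0)}{U'(r_0)}\big(U(r)-U(r_0)\big)$. Suppose there exist $\Xi>0$ and a compact set $\mathcal{R}_0\ni r_0$ such that: (1) there exist $N_1\ge2$ and constants $C_i<\infty$ so that for all $0\le i\le N_1-1$ and all $r_0\in\mathcal{R}_0$, $$\sup_{r\ge\Xi}\frac{|T^{(i)}(r)|}{|T(r)|}+\sup_{r\ge\Xi}\frac{|(r\Omega'(r))^{(i)}|}{|T(r)|}\le C_i;$$ (2) for some $N_2\in\mathbb{N}$, $$\sup_{r_0\in\mathcal{R}_0}\left(\sup_{r\ge\Xi}|T^{(N_1)}(r)|+\sup_{r\ge\Xi}|(r\Omega'(r))^{(N_2)}|\right)<\infty.$$ If further $\inf_{r_0\in\mathcal{R}_0}\inf_{r\ge\Xi}|T(r)|>0$, then there exist $N_3,N_4\in\mathbb{N}$ and a constant $C>0$ such that, uniformly for $r_0\in\mathcal{R}_0$ and all $r,r'\ge\Xi$, $$\frac{|T(r)-T(r')|}{|T(r')|}\le C\sum_{n=1}^{N_3}|r-r'|^n,\qquad \frac{|r\Omega'(r)|}{|T(r')|}\le C\sum_{n=1}^{N_4}|r-r'|^n,$$ and $\inf_{r_0\in\mathcal{R}_0}\inf_{r\ge\Xi}|T(r)|>0$.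
   Context: The conclusion is the paper's assumption (H2) on the velocity field $u=r\Omega(r)\hat\theta+U(r)\hat z$ of the Ponomarenko dynamo, with the compact set $\mathcal{R}_0$ of admissible critical radii; this lemma gives checkable derivative conditions implying it.
   Formalization: In the second bound the sum starts at n = 0 rather than n = 1, that is $|r\Omega'(r)|/|T(r')| \le C\sum_{n=0}^{N_4}|r-r'|^n$, so its right side also contains the constant term C. The statement above fails without it. *)

theory Defs
  imports "HOL-Analysis.Analysis"
begin

definition smooth_on_halfline :: "(real \<Rightarrow> real) \<Rightarrow> bool" where
  "smooth_on_halfline f \<longleftrightarrow>
     (\<exists>D :: nat \<Rightarrow> real \<Rightarrow> real.
        (\<forall>x\<ge>0. D 0 x = f x) \<and>
        (\<forall>k. \<forall>x\<ge>0. (D k has_real_derivative D (Suc k) x) (at x within {0..})))"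

definition Tfun :: "(real \<Rightarrow> real) \<Rightarrow> (real \<Rightarrow> real) \<Rightarrow> real \<Rightarrow> real \<Rightarrow> real" where
  "Tfun Om U r0 r = (Om r - Om r0) - deriv Om r0 / deriv U r0 * (U r - U r0)"

end

theory Submission
  imports Defs
begin

text \<open>Taylor expansion of T around r' to order N1 writes T r - T r' as a sum of terms
  T^(m)(r') (r - r')^m / m!, 1 \<le> m < N1, whose coefficients condition (1) bounds by a
  multiple of |T r'|, plus a Lagrange remainder whose coefficient condition (2) bounds by a
  constant M; since |T| \<ge> \<delta> > 0 on [Xi, \<infinity>), also M \<le> (M / \<delta>) |T r'|. Dividing by |T r'|
  gives the first estimate. The second follows from |r \<Omega>'(r)| \<le> C_0 |T r| (condition (1)
  with i = 0) and |T r| \<le> |T r'| + |T r - T r'|. All hypotheses are already uniform in r0, so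
  no property of the set of admissible r0 (compactness, positivity) is used.\<close>

lemma higher_deriv_eq_on_open:
  fixes f :: "real \<Rightarrow> real" and D :: "nat \<Rightarrow> real \<Rightarrow> real"
  assumes "open S"
    and D0: "\<And>x. x \<in> S \<Longrightarrow> D 0 x = f x"
    and DD: "\<And>k x. x \<in> S \<Longrightarrow> (D k has_real_derivative D (Suc k) x) (at x)"
    and "x \<in> S"
  shows "(deriv ^^ k) f x = D k x"
  using \<open>x \<in> S\<close>
proof (induction k arbitrary: x)
  case 0
  then show ?case by (simp add: D0)
next
  case (Suc k)
  have "((deriv ^^ k) f has_real_derivative D (Suc k) x) (at x)"
    by (rule has_field_derivative_transform_within_open[OF DD \<open>open S\<close>])
       (use Suc in auto)
  then show ?case by (simp add: DERIV_imp_deriv)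
qed

lemma has_real_derivative_higher_deriv_on_open:
  fixes f :: "real \<Rightarrow> real" and D :: "nat \<Rightarrow> real \<Rightarrow> real"
  assumes "open S"
    and D0: "\<And>x. x \<in> S \<Longrightarrow> D 0 x = f x"
    and DD: "\<And>k x. x \<in> S \<Longrightarrow> (D k has_real_derivative D (Suc k) x) (at x)"
    and "x \<in> S"
  shows "((deriv ^^ k) f has_real_derivative (deriv ^^ Suc k) f x) (at x)"
proof -
  have higher: "(deriv ^^ j) f y = D j y" if "y \<in> S" for j y
    using higher_deriv_eq_on_open[of S D f] assms that by blast
  have "((deriv ^^ k) f has_real_derivative D (Suc k) x) (at x)"
    by (rule has_field_derivative_transform_within_open[OF DD \<open>open S\<close> \<open>x \<in> S\<close>])
       (use \<open>x \<in> S\<close> higher in auto)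
  then show ?thesis by (simp only: higher[OF \<open>x \<in> S\<close>])
qed

lemma smooth_on_halfline_const: "smooth_on_halfline (\<lambda>_. c)"
  unfolding smooth_on_halfline_def
  by (rule exI[of _ "\<lambda>k _. if k = 0 then c else 0"]) auto

lemma smooth_on_halfline_diff:
  assumes "smooth_on_halfline f" "smooth_on_halfline g"
  shows "smooth_on_halfline (\<lambda>x. f x - g x)"
proof -
  obtain Df Dg where Df: "\<forall>x\<ge>0. Df 0 x = f x"
      "\<forall>k. \<forall>x\<ge>0. (Df k has_real_derivative Df (Suc k) x) (at x within {0..})"
    and Dg: "\<forall>x\<ge>0. Dg 0 x = g x"
      "\<forall>k. \<forall>x\<ge>0. (Dg k has_real_derivative Dg (Suc k) x) (at x within {0..})"
    using assms unfolding smooth_on_halfline_def by blast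
  show ?thesis
    unfolding smooth_on_halfline_def
    by (rule exI[of _ "\<lambda>k x. Df k x - Dg k x"]) (use Df Dg in \<open>auto intro!: derivative_intros\<close>)
qed

lemma smooth_on_halfline_cmult:
  assumes "smooth_on_halfline f"
  shows "smooth_on_halfline (\<lambda>x. c * f x)"
proof -
  obtain D where "\<forall>x\<ge>0. D 0 x = f x"
      "\<forall>k. \<forall>x\<ge>0. (D k has_real_derivative D (Suc k) x) (at x within {0..})"
    using assms unfolding smooth_on_halfline_def by blast
  then show ?thesis
    unfolding smooth_on_halfline_def
    by (intro exI[of _ "\<lambda>k x. c * D k x"]) (auto intro!: DERIV_cmult)
qed

lemma smooth_on_halfline_Tfun:
  assumes "smooth_on_halfline Om" "smooth_on_halfline U"
  shows "smooth_on_halfline (Tfun Om U r0)"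
proof -
  have "Tfun Om U r0 = (\<lambda>r. (Om r - Om r0) - deriv Om r0 / deriv U r0 * (U r - U r0))"
    by (simp add: Tfun_def fun_eq_iff)
  then show ?thesis
    by (simp only:) (intro smooth_on_halfline_diff smooth_on_halfline_cmult smooth_on_halfline_const assms)
qed

lemma smooth_on_halfline_has_higher_deriv:
  assumes "smooth_on_halfline f" "x > 0"
  shows "((deriv ^^ k) f has_real_derivative (deriv ^^ Suc k) f x) (at x)"
proof -
  obtain D where D0: "\<forall>x\<ge>0. D 0 x = f x"
    and DD: "\<forall>k. \<forall>x\<ge>0. (D k has_real_derivative D (Suc k) x) (at x within {0..})"
    using assms unfolding smooth_on_halfline_def by blast
  have DD_open: "(D k has_real_derivative D (Suc k) y) (at y)" if "y \<in> {0<..}" for k y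
  proof -
    have "(D k has_real_derivative D (Suc k) y) (at y within {0..})"
      using DD that by simp
    moreover have "at y within {0..} = at y"
      by (rule at_within_interior) (use that in auto)
    ultimately show ?thesis by simp
  qed
  show ?thesis
    by (rule has_real_derivative_higher_deriv_on_open[of "{0<..}" D f, OF _ _ DD_open]) (use D0 assms in auto)
qed

lemma abs_taylor_term_le:
  fixes c y B :: real
  assumes "\<bar>c\<bar> \<le> B"
  shows "\<bar>c / fact m * y ^ m\<bar> \<le> B * \<bar>y\<bar> ^ m"
proof -
  have "\<bar>c / fact m * y ^ m\<bar> = \<bar>c\<bar> / fact m * \<bar>y\<bar> ^ m"
    by (simp add: abs_mult power_abs)
  also have "\<dots> \<le> \<bar>c\<bar> * \<bar>y\<bar> ^ m"
    by (intro mult_right_mono) (simp_all add: divide_le_eq mult_le_cancel_left1)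
  also have "\<dots> \<le> B * \<bar>y\<bar> ^ m"
    by (intro mult_right_mono assms) simp
  finally show ?thesis .
qed

lemma taylor_diff_bound:
  fixes T :: "real \<Rightarrow> real"
  assumes derivs: "\<And>k x. a \<le> x \<Longrightarrow> ((deriv ^^ k) T has_real_derivative (deriv ^^ Suc k) T x) (at x)"
    and low: "\<And>m. 0 < m \<Longrightarrow> m \<le> K \<Longrightarrow> \<bar>(deriv ^^ m) T r'\<bar> \<le> B"
    and top: "\<And>t. a \<le> t \<Longrightarrow> \<bar>(deriv ^^ Suc K) T t\<bar> \<le> B"
    and "a \<le> r" "a \<le> r'"
  shows "\<bar>T r - T r'\<bar> \<le> B * (\<Sum>n=1..Suc K. \<bar>r - r'\<bar> ^ n)"
proof (cases "r = r'")
  case True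
  then have "(\<Sum>n=1..Suc K. \<bar>r - r'\<bar> ^ n) = 0"
    by (intro sum.neutral) auto
  with True show ?thesis by simp
next
  case False
  define summand where "summand m = (deriv ^^ m) T r' / fact m * (r - r') ^ m" for m
  have "\<forall>m t. m < Suc K \<and> min r r' \<le> t \<and> t \<le> max r r' \<longrightarrow>
      ((deriv ^^ m) T has_real_derivative (deriv ^^ Suc m) T t) (at t)"
    using derivs \<open>a \<le> r\<close> \<open>a \<le> r'\<close> by auto
  then obtain t where t: "if r < r' then r < t \<and> t < r' else r' < t \<and> t < r"
    and taylor: "T r = (\<Sum>m<Suc K. summand m) + (deriv ^^ Suc K) T t / fact (Suc K) * (r - r') ^ Suc K"
    using Taylor[of "Suc K" "\<lambda>m. (deriv ^^ m) T" T "min r r'" "max r r'" r' r] False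
    unfolding summand_def by auto
  have "a \<le> t"
    using t \<open>a \<le> r\<close> \<open>a \<le> r'\<close> by (auto split: if_splits)
  have "(\<Sum>m<Suc K. summand m) = T r' + (\<Sum>m=1..K. summand m)"
    by (simp add: lessThan_Suc_atMost atLeast0AtMost[symmetric] sum.atLeast_Suc_atMost summand_def)
  with taylor have "T r - T r' = (\<Sum>m=1..K. summand m)
      + (deriv ^^ Suc K) T t / fact (Suc K) * (r - r') ^ Suc K"
    by linarith
  then have "\<bar>T r - T r'\<bar> \<le> (\<Sum>m=1..K. \<bar>summand m\<bar>)
      + \<bar>(deriv ^^ Suc K) T t / fact (Suc K) * (r - r') ^ Suc K\<bar>"
    by (simp only:) (rule order_trans[OF abs_triangle_ineq add_mono[OF sum_abs order_refl]])
  also have "\<dots> \<le> (\<Sum>m=1..K. B * \<bar>r - r'\<bar> ^ m) + B * \<bar>r - r'\<bar> ^ Suc K"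
    unfolding summand_def
    by (intro add_mono sum_mono abs_taylor_term_le low top \<open>a \<le> t\<close>) auto
  also have "\<dots> = B * (\<Sum>n=1..Suc K. \<bar>r - r'\<bar> ^ n)"
    by (simp add: sum_distrib_left distrib_left)
  finally show ?thesis .
qed

lemma relative_taylor_bounds:
  fixes T g :: "real \<Rightarrow> real"
  assumes derivs: "\<And>k x. a \<le> x \<Longrightarrow> ((deriv ^^ k) T has_real_derivative (deriv ^^ Suc k) T x) (at x)"
    and lower: "\<And>x. a \<le> x \<Longrightarrow> \<delta> \<le> \<bar>T x\<bar>" and "0 < \<delta>"
    and low: "\<And>m x. m \<le> K \<Longrightarrow> a \<le> x \<Longrightarrow> \<bar>(deriv ^^ m) T x\<bar> \<le> A * \<bar>T x\<bar>"
    and top: "\<And>x. a \<le> x \<Longrightarrow> \<bar>(deriv ^^ Suc K) T x\<bar> \<le> M"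
    and g: "\<And>x. a \<le> x \<Longrightarrow> \<bar>g x\<bar> \<le> A * \<bar>T x\<bar>"
    and "a \<le> r" "a \<le> r'"
  shows "\<bar>T r - T r'\<bar> / \<bar>T r'\<bar> \<le> (A + M / \<delta>) * (\<Sum>n=1..Suc K. \<bar>r - r'\<bar> ^ n)"
    and "\<bar>g r\<bar> / \<bar>T r'\<bar> \<le> A * (1 + (A + M / \<delta>) * (\<Sum>n=1..Suc K. \<bar>r - r'\<bar> ^ n))"
proof -
  define S where "S = (\<Sum>n=1..Suc K. \<bar>r - r'\<bar> ^ n)"
  define \<tau> where "\<tau> = \<bar>T r'\<bar>"
  have "\<delta> \<le> \<tau>" "0 < \<tau>"
    using lower[OF \<open>a \<le> r'\<close>] \<open>0 < \<delta>\<close> by (auto simp: \<tau>_def)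
  have "0 \<le> M"
    using top[OF \<open>a \<le> r'\<close>] by linarith
  have "0 \<le> A"
    using low[of 0, OF _ \<open>a \<le> r'\<close>] \<open>0 < \<tau>\<close> by (simp add: \<tau>_def zero_le_mult_iff)
  have "M \<le> M / \<delta> * \<tau>"
    using mult_left_mono[OF \<open>\<delta> \<le> \<tau>\<close>, of "M / \<delta>"] \<open>0 \<le> M\<close> \<open>0 < \<delta>\<close> by simp
  moreover have "0 \<le> A * \<tau>" "0 \<le> M / \<delta> * \<tau>"
    using \<open>0 \<le> A\<close> \<open>0 \<le> M\<close> \<open>0 < \<delta>\<close> \<open>0 < \<tau>\<close> by simp_all
  moreover have "(A + M / \<delta>) * \<tau> = A * \<tau> + M / \<delta> * \<tau>"
    by (simp add: distrib_right)
  ultimately have bounds: "M \<le> (A + M / \<delta>) * \<tau>" "A * \<tau> \<le> (A + M / \<delta>) * \<tau>"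
    by linarith+
  have top': "\<bar>(deriv ^^ Suc K) T x\<bar> \<le> (A + M / \<delta>) * \<tau>" if "a \<le> x" for x
    using top[OF that] bounds by linarith
  have low': "\<bar>(deriv ^^ m) T r'\<bar> \<le> (A + M / \<delta>) * \<tau>" if "m \<le> K" for m
    using low[OF that \<open>a \<le> r'\<close>] bounds by (simp add: \<tau>_def)
  have "\<bar>T r - T r'\<bar> \<le> (A + M / \<delta>) * \<tau> * S"
    unfolding S_def using taylor_diff_bound[OF derivs low' top' \<open>a \<le> r\<close> \<open>a \<le> r'\<close>] by simp
  then show rel: "\<bar>T r - T r'\<bar> / \<bar>T r'\<bar> \<le> (A + M / \<delta>) * S"
    using \<open>0 < \<tau>\<close> by (simp add: \<tau>_def divide_le_eq mult_ac)
  have "\<bar>g r\<bar> / \<bar>T r'\<bar> \<le> A * (\<bar>T r\<bar> / \<tau>)"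
    using g[OF \<open>a \<le> r\<close>] \<open>0 < \<tau>\<close> by (simp add: \<tau>_def divide_right_mono)
  also have "\<dots> \<le> A * (1 + \<bar>T r - T r'\<bar> / \<bar>T r'\<bar>)"
    using \<open>0 \<le> A\<close> \<open>0 < \<tau>\<close> by (intro mult_left_mono) (simp_all add: \<tau>_def field_simps)
  also have "\<dots> \<le> A * (1 + (A + M / \<delta>) * S)"
    using \<open>0 \<le> A\<close> rel by (intro mult_left_mono) simp_all
  finally show "\<bar>g r\<bar> / \<bar>T r'\<bar> \<le> A * (1 + (A + M / \<delta>) * S)" .
qed

lemma le_one_plus_sq_bounds:
  fixes a x s :: real
  assumes "0 \<le> a" "a \<le> x" "0 \<le> s"
  shows "x * s \<le> (1 + x)\<^sup>2 * s"
    and "a * (1 + x * s) \<le> (1 + x)\<^sup>2 * (1 + s)"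
proof -
  have "1 * x \<le> (1 + x) * (1 + x)"
    by (intro mult_mono) (use assms in auto)
  then show "x * s \<le> (1 + x)\<^sup>2 * s"
    using assms by (simp add: power2_eq_square mult_right_mono)
  have "a * (1 + x * s) \<le> (1 + x) * ((1 + x) * (1 + s))"
    by (intro mult_mono) (use assms in \<open>auto simp: algebra_simps\<close>)
  then show "a * (1 + x * s) \<le> (1 + x)\<^sup>2 * (1 + s)"
    by (simp add: power2_eq_square mult.assoc)
qed

lemma relative_taylor_estimates:
  fixes T g :: "real \<Rightarrow> real"
  assumes derivs: "\<And>k x. a \<le> x \<Longrightarrow> ((deriv ^^ k) T has_real_derivative (deriv ^^ Suc k) T x) (at x)"
    and lower: "\<And>x. a \<le> x \<Longrightarrow> \<delta> \<le> \<bar>T x\<bar>" and "0 < \<delta>"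
    and ratio: "\<And>i x. i \<le> K \<Longrightarrow> a \<le> x \<Longrightarrow>
      \<bar>(deriv ^^ i) T x\<bar> / \<bar>T x\<bar> + \<bar>(deriv ^^ i) g x\<bar> / \<bar>T x\<bar> \<le> A"
    and top: "\<And>x. a \<le> x \<Longrightarrow> \<bar>(deriv ^^ Suc K) T x\<bar> \<le> M"
    and "a \<le> r" "a \<le> r'"
  shows "\<bar>T r - T r'\<bar> / \<bar>T r'\<bar> \<le> (1 + A + M / \<delta>)\<^sup>2 * (\<Sum>n=1..Suc K. \<bar>r - r'\<bar> ^ n)"
    and "\<bar>g r\<bar> / \<bar>T r'\<bar> \<le> (1 + A + M / \<delta>)\<^sup>2 * (\<Sum>n=0..Suc K. \<bar>r - r'\<bar> ^ n)"
proof -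
  have ratio_abs: "\<bar>(deriv ^^ i) T x\<bar> \<le> A * \<bar>T x\<bar> \<and> \<bar>(deriv ^^ i) g x\<bar> \<le> A * \<bar>T x\<bar>"
    if "i \<le> K" "a \<le> x" for i x
  proof -
    have "0 < \<bar>T x\<bar>"
      using lower[OF \<open>a \<le> x\<close>] \<open>0 < \<delta>\<close> by linarith
    with ratio[OF that] have "\<bar>(deriv ^^ i) T x\<bar> + \<bar>(deriv ^^ i) g x\<bar> \<le> A * \<bar>T x\<bar>"
      by (simp add: add_divide_distrib[symmetric] divide_le_eq)
    then show ?thesis
      using abs_ge_zero[of "(deriv ^^ i) T x"] abs_ge_zero[of "(deriv ^^ i) g x"] by linarith
  qed
  then have low: "\<bar>(deriv ^^ m) T x\<bar> \<le> A * \<bar>T x\<bar>" if "m \<le> K" "a \<le> x" for m x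
    using that by blast
  have g_le: "\<bar>g x\<bar> \<le> A * \<bar>T x\<bar>" if "a \<le> x" for x
    using ratio_abs[OF _ that, of 0] by simp
  have "0 \<le> M"
    using top[OF \<open>a \<le> r\<close>] by linarith
  have "0 \<le> A"
    using low[OF _ \<open>a \<le> r\<close>, of 0] lower[OF \<open>a \<le> r\<close>] \<open>0 < \<delta>\<close>
    by (auto simp: mult_le_cancel_right1)
  define S where "S = (\<Sum>n=1..Suc K. \<bar>r - r'\<bar> ^ n)"
  note rel = relative_taylor_bounds[OF derivs lower \<open>0 < \<delta>\<close> low top g_le \<open>a \<le> r\<close> \<open>a \<le> r'\<close>,
      folded S_def]
  have "0 \<le> S"
    by (simp add: S_def sum_nonneg)
  note sq_bounds = le_one_plus_sq_bounds[of A "A + M / \<delta>" S, unfolded add.assoc[symmetric]]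
  have "\<bar>T r - T r'\<bar> / \<bar>T r'\<bar> \<le> (A + M / \<delta>) * S"
    by (rule rel(1))
  also have "\<dots> \<le> (1 + A + M / \<delta>)\<^sup>2 * S"
    using sq_bounds \<open>0 \<le> A\<close> \<open>0 \<le> M\<close> \<open>0 < \<delta>\<close> \<open>0 \<le> S\<close> by simp
  finally show "\<bar>T r - T r'\<bar> / \<bar>T r'\<bar> \<le> (1 + A + M / \<delta>)\<^sup>2 * (\<Sum>n=1..Suc K. \<bar>r - r'\<bar> ^ n)"
    unfolding S_def .
  have "\<bar>g r\<bar> / \<bar>T r'\<bar> \<le> A * (1 + (A + M / \<delta>) * S)"
    by (rule rel(2))
  also have "\<dots> \<le> (1 + A + M / \<delta>)\<^sup>2 * (1 + S)"
    using sq_bounds \<open>0 \<le> A\<close> \<open>0 \<le> M\<close> \<open>0 < \<delta>\<close> \<open>0 \<le> S\<close> by simp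
  also have "1 + S = (\<Sum>n=0..Suc K. \<bar>r - r'\<bar> ^ n)"
    unfolding S_def by (simp add: sum.atLeast_Suc_atMost)
  finally show "\<bar>g r\<bar> / \<bar>T r'\<bar> \<le> (1 + A + M / \<delta>)\<^sup>2 * (\<Sum>n=0..Suc K. \<bar>r - r'\<bar> ^ n)" .
qed

theorem lemma3p2:
  fixes Om U :: "real \<Rightarrow> real" and Xi :: real and R0 :: "real set"
    and N1 N2 :: nat and Cs :: "nat \<Rightarrow> real"
  assumes smooth_Om: "smooth_on_halfline Om"
    and smooth_U: "smooth_on_halfline U"
    and Xi_pos: "Xi > 0"
    and R0_compact: "compact R0" and R0_ne: "R0 \<noteq> {}" and R0_pos: "R0 \<subseteq> {0<..}"
    and N1_ge: "N1 \<ge> 2"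
    and cond1: "\<forall>i<N1. \<forall>r0\<in>R0. \<forall>r s. r \<ge> Xi \<longrightarrow> s \<ge> Xi \<longrightarrow>
                 \<bar>(deriv ^^ i) (Tfun Om U r0) r\<bar> / \<bar>Tfun Om U r0 r\<bar>
               + \<bar>(deriv ^^ i) (\<lambda>x. x * deriv Om x) s\<bar> / \<bar>Tfun Om U r0 s\<bar> \<le> Cs i"
    and cond2: "\<exists>M. \<forall>r0\<in>R0. \<forall>r s. r \<ge> Xi \<longrightarrow> s \<ge> Xi \<longrightarrow>
                 \<bar>(deriv ^^ N1) (Tfun Om U r0) r\<bar>
               + \<bar>(deriv ^^ N2) (\<lambda>x. x * deriv Om x) s\<bar> \<le> M"
    and inf_pos: "\<exists>\<delta>>0. \<forall>r0\<in>R0. \<forall>r\<ge>Xi. \<bar>Tfun Om U r0 r\<bar> \<ge> \<delta>"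
  shows "\<exists>(N3::nat) (N4::nat) (C::real). C > 0 \<and>
           (\<forall>r0\<in>R0. \<forall>r r'. r \<ge> Xi \<longrightarrow> r' \<ge> Xi \<longrightarrow>
              \<bar>Tfun Om U r0 r - Tfun Om U r0 r'\<bar> / \<bar>Tfun Om U r0 r'\<bar>
                 \<le> C * (\<Sum>n=1..N3. \<bar>r - r'\<bar> ^ n) \<and>
              \<bar>r * deriv Om r\<bar> / \<bar>Tfun Om U r0 r'\<bar>
                 \<le> C * (\<Sum>n=0..N4. \<bar>r - r'\<bar> ^ n))
         \<and> (\<exists>\<delta>>0. \<forall>r0\<in>R0. \<forall>r\<ge>Xi. \<bar>Tfun Om U r0 r\<bar> \<ge> \<delta>)"
proof -
  obtain M where M: "\<forall>r0\<in>R0. \<forall>r s. r \<ge> Xi \<longrightarrow> s \<ge> Xi \<longrightarrow>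
      \<bar>(deriv ^^ N1) (Tfun Om U r0) r\<bar> + \<bar>(deriv ^^ N2) (\<lambda>x. x * deriv Om x) s\<bar> \<le> M"
    using cond2 by blast
  obtain \<delta> where "\<delta> > 0" and lower: "\<forall>r0\<in>R0. \<forall>r\<ge>Xi. \<bar>Tfun Om U r0 r\<bar> \<ge> \<delta>"
    using inf_pos by blast
  obtain K where N1: "N1 = Suc K"
    using N1_ge by (cases N1) auto
  define A where "A = (\<Sum>i<N1. \<bar>Cs i\<bar>)"
  have Cs_le: "Cs i \<le> A" if "i < N1" for i
    unfolding A_def using member_le_sum[of i "{..<N1}" "\<lambda>i. \<bar>Cs i\<bar>"] that by force
  have est: "\<bar>Tfun Om U r0 r - Tfun Om U r0 r'\<bar> / \<bar>Tfun Om U r0 r'\<bar>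
        \<le> (1 + A + \<bar>M\<bar> / \<delta>)\<^sup>2 * (\<Sum>n=1..N1. \<bar>r - r'\<bar> ^ n)
      \<and> \<bar>r * deriv Om r\<bar> / \<bar>Tfun Om U r0 r'\<bar>
        \<le> (1 + A + \<bar>M\<bar> / \<delta>)\<^sup>2 * (\<Sum>n=0..N1. \<bar>r - r'\<bar> ^ n)"
    if "r0 \<in> R0" "Xi \<le> r" "Xi \<le> r'" for r0 r r'
  proof -
    have "((deriv ^^ k) (Tfun Om U r0) has_real_derivative (deriv ^^ Suc k) (Tfun Om U r0) x) (at x)"
      if "Xi \<le> x" for k x
      using smooth_on_halfline_has_higher_deriv[OF smooth_on_halfline_Tfun[OF smooth_Om smooth_U]]
        Xi_pos that by simp
    moreover have "\<bar>(deriv ^^ i) (Tfun Om U r0) x\<bar> / \<bar>Tfun Om U r0 x\<bar>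
        + \<bar>(deriv ^^ i) (\<lambda>x. x * deriv Om x) x\<bar> / \<bar>Tfun Om U r0 x\<bar> \<le> A"
      if "i \<le> K" "Xi \<le> x" for i x
      using cond1[rule_format, of i r0 x x] Cs_le[of i] N1 that \<open>r0 \<in> R0\<close> by simp
    moreover have "\<bar>(deriv ^^ Suc K) (Tfun Om U r0) x\<bar> \<le> \<bar>M\<bar>" if "Xi \<le> x" for x
      using M \<open>r0 \<in> R0\<close> that N1 by (smt (verit) abs_ge_zero)
    ultimately show ?thesis
      using relative_taylor_estimates[of Xi "Tfun Om U r0" \<delta> K "\<lambda>x. x * deriv Om x" A "\<bar>M\<bar>" r r']
        lower \<open>r0 \<in> R0\<close> \<open>\<delta> > 0\<close> that N1 by simp
  qed
  have "0 < 1 + A + \<bar>M\<bar> / \<delta>"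
    using \<open>\<delta> > 0\<close> by (intro add_pos_nonneg) (simp_all add: A_def sum_nonneg)
  then have "(1 + A + \<bar>M\<bar> / \<delta>)\<^sup>2 > 0"
    by simp
  with est inf_pos show ?thesis
    by blast
qed

end
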